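(* Let $N,M,D\ge 1$ and let $T:\mathbb{R}^{M}\times\cdots\times\mathbb{R}^{M}\to\mathbb{R}^D$ ($N$ factors) be a real $N$-linear map, written $T(a^{(1)},\dots,a^{(N)})_i=\sum_{s\in\{1,\dots,M\}^N}T_{i,s}\prod_{k=1}^N a^{(k)}_{s_k}$, which is a contraction with respect to the Euclidean norm, i.e. $\|T(a^{(1)},\dots,a^{(N)})\|\le\prod_{k=1}^N\|a^{(k)}\|$ for all $a^{(1)},\dots,a^{(N)}\in\mathbb{R}^M$. Then every local hidden variable (LHV) model satisfies $$\Big\|\big\langle T(A^{(1)},\dots,A^{(N)})\big\rangle\Big\|^2\le\Big\langle\prod_{k=1}^N\|A^{(k)}\|^2\Big\rangle,$$ i.e. $\sum_{i=1}^D\Big(\sum_{s}T_{i,s}\big\langle\prod_{k}A^{(k)}_{s_k}\big\rangle\Big)^2\le\sum_{s}\big\langle\prod_k (A^{(k)}_{s_k})^2\big\rangle$, whenever the right-hand side is finite.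
   Context: Setting: $N$ parties, each with $M$ observables. An LHV model is a probability space $(\Lambda,\mu)$ together with real-valued measurable functions $A^{(k)}_j:\Lambda\to\mathbb{R}$ ($k=1,\dots,N$ the site, $j=1,\dots,M$ the observable), $A^{(k)}_j(\lambda)$ being the value assigned to the $j$-th observable at site $k$; $A^{(k)}=(A^{(k)}_1,\dots,A^{(k)}_M)\in\mathbb{R}^M$, and $\langle\cdot\rangle$ denotes expectation with respect to $\mu$. $\|\cdot\|$ is the Euclidean norm. *)

theory Defs
  imports "HOL-Probability.Probability"
begin

text \<open>Vectors in R^n are represented as functions nat => real, only indices j < n matter.
  Multi-indices s in {1..M}^N are represented as extensional functions {0..<N} -> {0..<M}.\<close>

definition vnorm :: "nat \<Rightarrow> (nat \<Rightarrow> real) \<Rightarrow> real" where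
  "vnorm n v = sqrt (\<Sum>j<n. (v j)\<^sup>2)"

definition multilin :: "nat \<Rightarrow> nat \<Rightarrow> (nat \<Rightarrow> (nat \<Rightarrow> nat) \<Rightarrow> real) \<Rightarrow> (nat \<Rightarrow> nat \<Rightarrow> real) \<Rightarrow> nat \<Rightarrow> real" where
  "multilin N M T a i = (\<Sum>s\<in>{0..<N} \<rightarrow>\<^sub>E {0..<M}. T i s * (\<Prod>k<N. a k (s k)))"

end

theory Submission
  imports Defs
begin

text \<open>Pointwise in the hidden variable, the contraction property bounds the norm of
  \<open>T(A\<^sup>1, \<dots>, A\<^sup>N)\<close> by \<open>P = \<Prod>\<^sub>k \<parallel>A\<^sup>k\<parallel>\<close>. The norm of an expectation is at most the
  expectation of the norm (Cauchy-Schwarz against the mean vector), so the left-hand side is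
  at most \<open>\<langle>P\<rangle>\<^sup>2\<close>, and \<open>\<langle>P\<rangle>\<^sup>2 \<le> \<langle>P\<^sup>2\<rangle>\<close> because variances are nonnegative.\<close>

lemma vnorm_nonneg: "0 \<le> vnorm n v"
  by (simp add: vnorm_def sum_nonneg)

lemma abs_le_vnorm:
  assumes "i < n"
  shows "\<bar>v i\<bar> \<le> vnorm n v"
proof -
  have "(v i)\<^sup>2 \<le> (\<Sum>j<n. (v j)\<^sup>2)"
    using assms by (intro member_le_sum) auto
  then show ?thesis
    unfolding vnorm_def by (metis real_sqrt_abs real_sqrt_le_mono)
qed

lemma sum_mult_le_vnorm_mult: "(\<Sum>i<n. u i * v i) \<le> vnorm n u * vnorm n v"
proof -
  have "(\<Sum>i<n. u i * v i) \<le> (\<Sum>i<n. \<bar>u i\<bar> * \<bar>v i\<bar>)"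
    by (intro sum_mono) (simp add: abs_mult[symmetric])
  also have "\<dots> \<le> vnorm n u * vnorm n v"
    unfolding vnorm_def using L2_set_mult_ineq[of u v "{..<n}"] by (simp add: L2_set_def)
  finally show ?thesis .
qed

lemma borel_measurable_vnorm:
  assumes "\<And>j. j < n \<Longrightarrow> v j \<in> borel_measurable M"
  shows "(\<lambda>x. vnorm n (\<lambda>j. v j x)) \<in> borel_measurable M"
  unfolding vnorm_def using assms
  by (intro measurable_compose[OF _ borel_measurable_sqrt] borel_measurable_sum
      borel_measurable_power) auto

lemma borel_measurable_multilin:
  assumes "\<And>k j. k < N \<Longrightarrow> j < M \<Longrightarrow> A k j \<in> borel_measurable \<mu>"
  shows "(\<lambda>l. multilin N M T (\<lambda>k j. A k j l) i) \<in> borel_measurable \<mu>"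
  unfolding multilin_def using assms
  by (intro borel_measurable_sum borel_measurable_times borel_measurable_const
      borel_measurable_prod) (auto simp: PiE_iff)

lemma vnorm_integral_le:
  assumes meas: "\<And>i. i < n \<Longrightarrow> f i \<in> borel_measurable M"
    and g: "integrable M g"
    and bound: "\<And>x. x \<in> space M \<Longrightarrow> vnorm n (\<lambda>i. f i x) \<le> g x"
  shows "vnorm n (\<lambda>i. \<integral>x. f i x \<partial>M) \<le> (\<integral>x. g x \<partial>M)"
proof -
  define c where "c i = (\<integral>x. f i x \<partial>M)" for i
  have f: "integrable M (f i)" if "i < n" for i
  proof (rule Bochner_Integration.integrable_bound[OF g meas[OF that]], intro AE_I2 impI)
    fix x assume "x \<in> space M"
    then show "norm (f i x) \<le> norm (g x)"
      using abs_le_vnorm[OF that, of "\<lambda>i. f i x"] bound by force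
  qed
  have "0 \<le> (\<integral>x. g x \<partial>M)"
    using bound vnorm_nonneg by (intro integral_nonneg_AE AE_I2) (metis order_trans)
  moreover have "(vnorm n c)\<^sup>2 \<le> vnorm n c * (\<integral>x. g x \<partial>M)"
  proof -
    have "(vnorm n c)\<^sup>2 = (\<Sum>i<n. c i * c i)"
      by (simp add: vnorm_def power2_eq_square sum_nonneg)
    also have "\<dots> = (\<integral>x. (\<Sum>i<n. c i * f i x) \<partial>M)"
      using f by (simp add: c_def)
    also have "\<dots> \<le> (\<integral>x. vnorm n c * g x \<partial>M)"
    proof (intro integral_mono_AE AE_I2 impI)
      fix x assume "x \<in> space M"
      then show "(\<Sum>i<n. c i * f i x) \<le> vnorm n c * g x"
        using sum_mult_le_vnorm_mult[of c "\<lambda>i. f i x" n] bound[of x] vnorm_nonneg[of n c]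
        by (meson mult_left_mono order_trans)
    qed (use f g in auto)
    finally show ?thesis by simp
  qed
  ultimately show ?thesis
    unfolding c_def[symmetric] using vnorm_nonneg[of n c]
    by (cases "vnorm n c = 0") (auto simp: power2_eq_square)
qed

lemma (in prob_space) square_expectation_le:
  fixes f :: "'a \<Rightarrow> real"
  assumes "integrable M f" and "integrable M (\<lambda>x. (f x)\<^sup>2)"
  shows "(expectation f)\<^sup>2 \<le> expectation (\<lambda>x. (f x)\<^sup>2)"
  using variance_eq[OF assms] variance_positive[of f] by simp

theorem proposition1:
  fixes N M D :: nat
    and T :: "nat \<Rightarrow> (nat \<Rightarrow> nat) \<Rightarrow> real"
    and \<mu> :: "'l measure"
    and A :: "nat \<Rightarrow> nat \<Rightarrow> 'l \<Rightarrow> real"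
  assumes "N \<ge> 1" and "M \<ge> 1" and "D \<ge> 1"
    and contraction: "\<And>a. vnorm D (multilin N M T a) \<le> (\<Prod>k<N. vnorm M (a k))"
    and "prob_space \<mu>"
    and meas: "\<And>k j. k < N \<Longrightarrow> j < M \<Longrightarrow> A k j \<in> borel_measurable \<mu>"
    and finite_rhs: "integrable \<mu> (\<lambda>l. \<Prod>k<N. (vnorm M (\<lambda>j. A k j l))\<^sup>2)"
  shows "(vnorm D (\<lambda>i. \<integral>l. multilin N M T (\<lambda>k j. A k j l) i \<partial>\<mu>))\<^sup>2
           \<le> (\<integral>l. (\<Prod>k<N. (vnorm M (\<lambda>j. A k j l))\<^sup>2) \<partial>\<mu>)"
proof -
  interpret prob_space \<mu> by fact
  define P where "P l = (\<Prod>k<N. vnorm M (\<lambda>j. A k j l))" for l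
  have P_square: "(P l)\<^sup>2 = (\<Prod>k<N. (vnorm M (\<lambda>j. A k j l))\<^sup>2)" for l
    by (simp add: P_def prod_power_distrib)
  have P_square_int: "integrable \<mu> (\<lambda>l. (P l)\<^sup>2)"
    unfolding P_square by (fact finite_rhs)
  have P_meas: "P \<in> borel_measurable \<mu>"
    unfolding P_def using meas by (intro borel_measurable_prod borel_measurable_vnorm) auto
  have P_int: "integrable \<mu> P"
    by (rule square_integrable_imp_integrable[OF P_meas P_square_int])
  have "vnorm D (\<lambda>i. \<integral>l. multilin N M T (\<lambda>k j. A k j l) i \<partial>\<mu>) \<le> expectation P"
  proof (rule vnorm_integral_le[OF borel_measurable_multilin P_int])
    show "A k j \<in> borel_measurable \<mu>" if "k < N" "j < M" for k j
      using meas that .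
    show "vnorm D (\<lambda>i. multilin N M T (\<lambda>k j. A k j l) i) \<le> P l" for l
      unfolding P_def using contraction by simp
  qed
  then have "(vnorm D (\<lambda>i. \<integral>l. multilin N M T (\<lambda>k j. A k j l) i \<partial>\<mu>))\<^sup>2 \<le> (expectation P)\<^sup>2"
    by (intro power_mono vnorm_nonneg)
  also have "\<dots> \<le> expectation (\<lambda>l. (P l)\<^sup>2)"
    by (rule square_expectation_le[OF P_int P_square_int])
  finally show ?thesis
    unfolding P_square .
qed

end
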